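(* Let $q$ be a prime power, $L$ an integer with $1\le L<q$, and $r\in[0,\frac{L}{L+1})$ with $rn\in\mathbb{N}$. If $C\subseteq\mathbb{F}_q^n$ is a linear $[n,k]_q$ code that is $(r,L)$ list-decodable with $k=n-\lceil\frac{L+1}{L}rn\rceil$, then $d(C)\ge n-k$. Moreover, if $L\mid rn$ then $d(C)\ge n-k+1$, i.e. $C$ is MDS.
   Context: A linear $[n,k]_q$ code is a $k$-dimensional subspace of $\mathbb{F}_q^n$; $d(C)$ is its minimum Hamming distance; MDS means $d(C)=n-k+1$. $C$ is $(r,L)$ list-decodable if every Hamming ball of radius $rn$ in $\mathbb{F}_q^n$ contains at most $L$ codewords. *)

theory Defs
  imports "HOL-Analysis.Analysis" "HOL-Library.Extended_Nat"
begin

text \<open>Hamming distance on F_q^n, rendered as 'a^'n with 'a a finite field, n = CARD('n).\<close>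
definition hamming_dist :: "'a ^ 'n \<Rightarrow> 'a ^ 'n \<Rightarrow> nat" where
  "hamming_dist x y = card {i. x $ i \<noteq> y $ i}"

text \<open>Minimum distance of a code (infinity for codes with fewer than two words).\<close>
definition min_dist :: "('a ^ 'n) set \<Rightarrow> enat" where
  "min_dist C = (INF p \<in> {(x, y). x \<in> C \<and> y \<in> C \<and> x \<noteq> y}. enat (hamming_dist (fst p) (snd p)))"

definition linear_code :: "('a::field ^ 'n) set \<Rightarrow> nat \<Rightarrow> bool" where
  "linear_code C k \<longleftrightarrow> vec.subspace C \<and> vec.dim C = k"

definition list_decodable :: "('a ^ 'n::finite) set \<Rightarrow> real \<Rightarrow> nat \<Rightarrow> bool" where
  "list_decodable C r L \<longleftrightarrow>
     (\<forall>y. card {c \<in> C. real (hamming_dist c y) \<le> r * real CARD('n)} \<le> L)"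

end

theory Submission
  imports Defs
begin

text \<open>
  Let \<open>c\<close> be a nonzero codeword of weight \<open>w\<close> with \<open>L w \<le> (L + 1) t\<close>, where \<open>t = r n\<close>.
  Fix \<open>L + 1\<close> distinct scalars \<open>\<alpha>\<^sub>0, \<dots>, \<alpha>\<^sub>L\<close>, split the support of \<open>c\<close> into \<open>L + 1\<close>
  nearly equal classes and let \<open>y\<close> agree with \<open>\<alpha>\<^sub>j c\<close> on the \<open>j\<close>-th class. Each of the
  \<open>L + 1\<close> codewords \<open>\<alpha>\<^sub>j c\<close> then lies within distance \<open>w - \<lfloor>w / (L + 1)\<rfloor> \<le> t\<close> of \<open>y\<close>,
  contradicting list decodability. Hence every nonzero codeword has weight greater than
  \<open>(L + 1) t / L\<close>, which by linearity bounds the minimum distance.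
\<close>

definition hamming_weight :: "'a::zero ^ 'n \<Rightarrow> nat" where
  "hamming_weight c = card {i. c $ i \<noteq> 0}"

lemma hamming_dist_eq_weight_diff:
  fixes x y :: "'a::ab_group_add ^ 'n"
  shows "hamming_dist x y = hamming_weight (x - y)"
  unfolding hamming_dist_def hamming_weight_def by simp

lemma min_dist_subspace_ge:
  fixes C :: "('a::field ^ 'n) set"
  assumes "vec.subspace C"
    and "\<And>c. c \<in> C \<Longrightarrow> c \<noteq> 0 \<Longrightarrow> m \<le> hamming_weight c"
  shows "enat m \<le> min_dist C"
  unfolding min_dist_def
  using assms by (auto intro!: INF_greatest simp: hamming_dist_eq_weight_diff vec.subspace_diff)

lemma card_residue_class_ge:
  fixes d j w :: nat
  assumes "j < d"
  shows "w div d \<le> card {m \<in> {..<w}. m mod d = j}"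
proof -
  let ?f = "\<lambda>m. d * m + j"
  have "?f ` {..<w div d} \<subseteq> {m \<in> {..<w}. m mod d = j}"
  proof (rule image_subsetI)
    fix m assume "m \<in> {..<w div d}"
    then have "d * Suc m \<le> d * (w div d)" by (intro mult_le_mono2) simp
    also have "\<dots> \<le> w" by simp
    finally show "?f m \<in> {m \<in> {..<w}. m mod d = j}" using assms by simp
  qed
  moreover have "inj_on ?f {..<w div d}"
    using assms by (auto intro: inj_onI)
  ultimately show ?thesis
    using card_inj_on_le[of ?f "{..<w div d}"] by simp
qed

lemma card_non_residue_class_le:
  fixes d j w :: nat
  assumes "j < d"
  shows "card {m \<in> {..<w}. m mod d \<noteq> j} \<le> w - w div d"
proof -
  let ?E = "{m \<in> {..<w}. m mod d = j}"
  have "card {m \<in> {..<w}. m mod d \<noteq> j} = card ({..<w} - ?E)"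
    by (rule arg_cong[where f = card]) auto
  also have "\<dots> = w - card ?E"
    by (subst card_Diff_subset) auto
  finally show ?thesis
    using card_residue_class_ge[OF assms, of w] by simp
qed

lemma diff_div_Suc_le:
  fixes w L t :: nat
  assumes "L * w \<le> (L + 1) * t"
  shows "w - w div (L + 1) \<le> t"
proof -
  define a b where "a = w div (L + 1)" and "b = w mod (L + 1)"
  have w: "w = (L + 1) * a + b" unfolding a_def b_def by (metis div_mult_mod_eq mult.commute)
  have "b < L + 1" unfolding b_def by simp
  have "(L + 1) * (L * a + b) = L * w + b" unfolding w by (simp add: algebra_simps)
  also have "\<dots> < (L + 1) * (t + 1)"
    using assms \<open>b < L + 1\<close> by (simp add: algebra_simps)
  finally have "L * a + b < t + 1" by (meson mult_less_cancel1)
  moreover have "w - a = L * a + b" unfolding w by (simp add: algebra_simps)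
  ultimately show ?thesis unfolding a_def by simp
qed

lemma inj_on_scalar_multiples:
  fixes c :: "'a::field ^ 'n"
  assumes "c \<noteq> 0" and "inj_on \<alpha> A"
  shows "inj_on (\<lambda>j. \<alpha> j *s c) A"
proof (rule inj_onI)
  fix j j' assume "j \<in> A" "j' \<in> A" and eq: "\<alpha> j *s c = \<alpha> j' *s c"
  obtain i where "c $ i \<noteq> 0" using assms(1) by (metis vec_eq_iff zero_index)
  with eq have "\<alpha> j = \<alpha> j'" by (metis mult_cancel_right vector_smult_component)
  with assms(2) \<open>j \<in> A\<close> \<open>j' \<in> A\<close> show "j = j'" by (meson inj_onD)
qed

lemma common_center_of_scalar_multiples:
  fixes c :: "'a::field ^ 'n" and \<alpha> :: "nat \<Rightarrow> 'a"
  assumes "inj_on \<alpha> {..<d}"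
  obtains y where
    "\<And>j. j < d \<Longrightarrow> hamming_dist (\<alpha> j *s c) y \<le> hamming_weight c - hamming_weight c div d"
proof -
  define S where "S = {i. c $ i \<noteq> 0}"
  define w where "w = card S"
  obtain h where h: "bij_betw h S {..<w}"
    using ex_bij_betw_finite_nat[of S] unfolding w_def atLeast0LessThan by auto
  define y where "y = (\<chi> i. \<alpha> (h i mod d) * c $ i)"
  have "hamming_dist (\<alpha> j *s c) y \<le> w - w div d" if "j < d" for j
  proof -
    have "\<alpha> j = \<alpha> (h i mod d) \<longleftrightarrow> h i mod d = j" for i
      using inj_onD[OF assms] \<open>j < d\<close> by fastforce
    then have "{i. (\<alpha> j *s c) $ i \<noteq> y $ i} = {i \<in> S. h i mod d \<noteq> j}"
      unfolding y_def S_def by auto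
    moreover have "bij_betw h {i \<in> S. h i mod d \<noteq> j} {m \<in> {..<w}. m mod d \<noteq> j}"
      using h by (auto simp: bij_betw_def inj_on_def)
    ultimately have "hamming_dist (\<alpha> j *s c) y = card {m \<in> {..<w}. m mod d \<noteq> j}"
      unfolding hamming_dist_def by (simp add: bij_betw_same_card)
    with card_non_residue_class_le[OF \<open>j < d\<close>] show ?thesis by simp
  qed
  then show ?thesis
    using that unfolding w_def S_def hamming_weight_def by blast
qed

lemma list_decodable_subspace_weight_gt:
  fixes C :: "('a::{finite, field} ^ 'n) set"
  assumes "L < CARD('a)"
    and "vec.subspace C"
    and balls: "\<And>y. card {c \<in> C. hamming_dist c y \<le> t} \<le> L"
    and "c \<in> C" and "c \<noteq> 0"
  shows "(L + 1) * t < L * hamming_weight c"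
proof (rule ccontr)
  assume "\<not> ?thesis"
  then have radius: "hamming_weight c - hamming_weight c div (L + 1) \<le> t"
    by (intro diff_div_Suc_le) simp
  obtain A :: "'a set" where "card A = L + 1"
    using obtain_subset_with_card_n[of "L + 1" "UNIV :: 'a set"] assms(1) by auto
  then obtain \<alpha> where "bij_betw \<alpha> {..<L + 1} A"
    using ex_bij_betw_nat_finite[of A] by (auto simp: atLeast0LessThan)
  then have \<alpha>: "inj_on \<alpha> {..<L + 1}" by (rule bij_betw_imp_inj_on)
  obtain y where
    y: "\<And>j. j < L + 1 \<Longrightarrow> hamming_dist (\<alpha> j *s c) y \<le> hamming_weight c - hamming_weight c div (L + 1)"
    using common_center_of_scalar_multiples[OF \<alpha>] by blast
  have "(\<lambda>j. \<alpha> j *s c) ` {..<L + 1} \<subseteq> {x \<in> C. hamming_dist x y \<le> t}"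
    using y radius vec.subspace_scale[OF assms(2,4)] by fastforce
  moreover have "card ((\<lambda>j. \<alpha> j *s c) ` {..<L + 1}) = L + 1"
    using card_image[OF inj_on_scalar_multiples[OF \<open>c \<noteq> 0\<close> \<alpha>]] by simp
  ultimately have "L + 1 \<le> card {x \<in> C. hamming_dist x y \<le> t}"
    by (metis card_mono finite)
  with balls[of y] show False by simp
qed

lemma ceiling_Suc_div_mult_le:
  fixes L t w :: nat
  assumes "0 < L" and "(L + 1) * t < L * w"
  shows "\<lceil>real (L + 1) / real L * real t\<rceil> \<le> int w"
    and "L dvd t \<Longrightarrow> \<lceil>real (L + 1) / real L * real t\<rceil> < int w"
proof -
  have "real ((L + 1) * t) < real (L * w)"
    using assms(2) by (simp only: of_nat_less_iff)
  then have lt: "real (L + 1) / real L * real t < real w"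
    using assms(1) by (simp add: field_simps)
  then show "\<lceil>real (L + 1) / real L * real t\<rceil> \<le> int w"
    by (simp add: ceiling_le_iff)
  assume "L dvd t"
  then obtain u where "t = L * u" by blast
  then have "real (L + 1) / real L * real t = real ((L + 1) * u)"
    using assms(1) by (simp add: field_simps)
  with lt show "\<lceil>real (L + 1) / real L * real t\<rceil> < int w"
    by (simp only: ceiling_of_nat of_nat_less_iff)
qed

theorem corollary6p5:
  fixes C :: "('a::{finite, field} ^ 'n) set"
    and r :: real and L k t :: nat
  assumes "1 \<le> L" and "L < CARD('a)"
    and "0 \<le> r" and "r < real L / real (L + 1)"
    and "r * real CARD('n) = real t"
    and "linear_code C k"
    and "list_decodable C r L"
    and "int k = int CARD('n) - \<lceil>real (L + 1) / real L * r * real CARD('n)\<rceil>"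
  shows "min_dist C \<ge> enat (CARD('n) - k) \<and>
         (L dvd t \<longrightarrow> min_dist C \<ge> enat (CARD('n) - k + 1))"
proof -
  define s where "s = \<lceil>real (L + 1) / real L * real t\<rceil>"
  have "0 \<le> real (L + 1) / real L * real t" by simp
  then have "0 \<le> s" unfolding s_def by linarith
  moreover have "int k = int CARD('n) - s"
    using assms(5,8) unfolding s_def by (simp add: mult.assoc)
  ultimately have distance: "int (CARD('n) - k) = s" by linarith
  have subspace: "vec.subspace C"
    using assms(6) by (simp add: linear_code_def)
  have weight: "CARD('n) - k \<le> hamming_weight c \<and>
      (L dvd t \<longrightarrow> CARD('n) - k < hamming_weight c)" if "c \<in> C" "c \<noteq> 0" for c
  proof -
    have "(L + 1) * t < L * hamming_weight c"
      using list_decodable_subspace_weight_gt[OF assms(2) subspace _ that] assms(5,7)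
      by (simp add: list_decodable_def)
    from ceiling_Suc_div_mult_le[OF _ this] assms(1)
    have "s \<le> int (hamming_weight c)" "L dvd t \<Longrightarrow> s < int (hamming_weight c)"
      unfolding s_def by simp_all
    with distance show ?thesis by auto
  qed
  show ?thesis
    using weight by (intro conjI impI min_dist_subspace_ge[OF subspace]) (auto simp: Suc_le_eq)
qed

end
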